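(* Let $f:\mathcal X\to\mathbb R$ be bounded and measurable, let $N\ge1$ be an integer, and for each $\beta\in[0,1]$ let $\tilde P_{\beta f}$ be a probability distribution on $\mathcal X$ (produced by some sampling algorithm). Consider the estimator: sample $\beta_1,\dots,\beta_N\sim\mathcal U([0,1])$ independently, draw $X_i\sim\tilde P_{\beta_i f}$ independently, and output $\tilde L_f=\frac1N\sum_{i=1}^Nf(X_i)$. Then for $\delta>0$, with probability at least $1-\delta$, \[|\tilde L_f-L_f|\le|L_f-\mathbb E\tilde L_f|+2\|f\|_\infty\sqrt{\frac{\log(2/\delta)}{2N}},\] where $|L_f-\mathbb E\tilde L_f|\le2\|f\|_\infty\sup_{\beta\in[0,1]}D_{\mathrm{TV}}(P_{\beta f},\tilde P_{\beta f})$ and, if $f$ is Lipschitz, $|L_f-\mathbb E\tilde L_f|\le|f|_1\sup_{\beta\in[0,1]}W_1(P_{\beta f},\tilde P_{\beta f})$.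
   Context: $\mathcal X=[0,1]^d$ with Lebesgue measure. For bounded measurable $h$: $Z_h=\int_{\mathcal X}e^h dx$, $L_h=\log Z_h$, $P_h$ the distribution with density $e^h/Z_h$. $|f|_1$ is the minimal Lipschitz constant of $f$ with respect to the Euclidean norm. $D_{\mathrm{TV}}(P,Q)=\sup_A|P(A)-Q(A)|$, $W_1(P,Q)=\inf_{X\sim P,Y\sim Q}\mathbb E\|X-Y\|_2$. $\|f\|_\infty$ is the essential supremum of $|f|$.
   Formalization: $\|f\|_\infty$ is the supremum of |f| over $\mathcal X$ rather than its essential supremum, and $\beta\mapsto\tilde P_{\beta f}$ is also assumed measurable from [0,1] into probability distributions on $\mathcal X$. The statement above fails without it. *)

theory Defs
  imports "HOL-Probability.Probability"
begin

definition cubeX :: "'a::euclidean_space set" where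
  "cubeX = cbox 0 One"

definition MX :: "'a::euclidean_space measure" where
  "MX = restrict_space lborel cubeX"

definition Zh :: "('a::euclidean_space \<Rightarrow> real) \<Rightarrow> real" where
  "Zh h = integral\<^sup>L MX (\<lambda>x. exp (h x))"

definition Lh :: "('a::euclidean_space \<Rightarrow> real) \<Rightarrow> real" where
  "Lh h = ln (Zh h)"

definition Ph :: "('a::euclidean_space \<Rightarrow> real) \<Rightarrow> 'a measure" where
  "Ph h = density MX (\<lambda>x. ennreal (exp (h x) / Zh h))"

definition supnorm :: "('a::euclidean_space \<Rightarrow> real) \<Rightarrow> real" where
  "supnorm f = (SUP x\<in>cubeX. \<bar>f x\<bar>)"

definition lipconst :: "('a::euclidean_space \<Rightarrow> real) \<Rightarrow> real" where
  "lipconst f = Inf {C. lipschitz_on C cubeX f}"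

definition dTV :: "'b measure \<Rightarrow> 'b measure \<Rightarrow> real" where
  "dTV P Q = Sup {\<bar>measure P A - measure Q A\<bar> | A. A \<in> sets P}"

definition couplings :: "'b measure \<Rightarrow> 'b measure \<Rightarrow> 'b measure \<Rightarrow> ('b \<times> 'b) measure set" where
  "couplings M P Q = {\<pi>. sets \<pi> = sets (M \<Otimes>\<^sub>M M) \<and> prob_space \<pi> \<and>
      distr \<pi> M fst = P \<and> distr \<pi> M snd = Q}"

definition W1 :: "'b::metric_space measure \<Rightarrow> 'b measure \<Rightarrow> 'b measure \<Rightarrow> real" where
  "W1 M P Q = Inf {integral\<^sup>L \<pi> (\<lambda>z. dist (fst z) (snd z)) | \<pi>. \<pi> \<in> couplings M P Q}"

definition U01 :: "real measure" where
  "U01 = restrict_space lborel {0..1}"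

definition pairlaw :: "(real \<Rightarrow> 'a::euclidean_space measure) \<Rightarrow> (real \<times> 'a) measure" where
  "pairlaw Pt = U01 \<bind> (\<lambda>b. Pt b \<bind> (\<lambda>x. return (U01 \<Otimes>\<^sub>M MX) (b, x)))"

definition sampleN :: "nat \<Rightarrow> (real \<Rightarrow> 'a::euclidean_space measure) \<Rightarrow> (nat \<Rightarrow> real \<times> 'a) measure" where
  "sampleN N Pt = PiM {..<N} (\<lambda>_. pairlaw Pt)"

definition Lest :: "nat \<Rightarrow> ('a \<Rightarrow> real) \<Rightarrow> (nat \<Rightarrow> real \<times> 'a) \<Rightarrow> real" where
  "Lest N f \<omega> = (\<Sum>i<N. f (snd (\<omega> i))) / real N"

end

theory Submission
  imports Defs
begin

(* Differentiating under the integral sign gives d/dbeta L_{beta f} = E_{P_{beta f}} f, and L_0 = 0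
   because the cube has volume 1, so L_f = int_0^1 E_{P_{beta f}} f dbeta (thermodynamic
   integration). Each term f(X_i) of the estimator has mean int_0^1 E_{Pt beta} f dbeta, so the
   bias is at most sup_beta |E_{P_{beta f}} f - E_{Pt beta} f|. This difference of means is at most
   2 |f|_inf D_TV (approximate f by a staircase of indicators of superlevel sets) and at most
   |f|_1 W_1 (integrate the Lipschitz bound against a coupling). The fluctuation around the mean is
   Hoeffding's inequality for N i.i.d. terms with values in [-|f|_inf, |f|_inf]. *)

lemma space_MX: "space MX = cubeX"
  by (simp add: MX_def space_restrict_space)

lemma bounded_cubeX: "bounded cubeX"
  by (simp add: cubeX_def)

lemma borel_id_MX: "(\<lambda>x. x) \<in> MX \<rightarrow>\<^sub>M borel"
  unfolding MX_def by (rule measurable_restrict_space1) simp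

lemma prob_space_MX: "prob_space MX"
proof
  have "emeasure lborel cubeX = 1"
    by (simp add: cubeX_def emeasure_lborel_cbox_eq inner_Basis)
  then show "emeasure MX (space MX) = 1"
    by (simp add: space_MX MX_def emeasure_restrict_space cubeX_def)
qed

interpretation MX: prob_space MX
  by (rule prob_space_MX)

lemma zero_in_cubeX: "0 \<in> cubeX"
  by (simp add: cubeX_def mem_box)

lemma space_U01: "space U01 = {0..1}"
  by (simp add: U01_def space_restrict_space)

lemma prob_space_U01: "prob_space U01"
  by standard (simp add: space_U01 U01_def emeasure_restrict_space)

interpretation U01: prob_space U01
  by (rule prob_space_U01)

lemma abs_le_supnorm:
  assumes "bounded (f ` cubeX)" and "x \<in> cubeX"
  shows "\<bar>f x\<bar> \<le> supnorm f"
  unfolding supnorm_def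
proof (rule cSUP_upper[OF \<open>x \<in> cubeX\<close>])
  obtain B where "\<forall>y\<in>f ` cubeX. norm y \<le> B"
    using assms(1) by (auto simp: bounded_iff)
  then show "bdd_above ((\<lambda>x. \<bar>f x\<bar>) ` cubeX)"
    by (auto intro!: bdd_aboveI[where M=B])
qed

lemma (in prob_space) abs_integral_le:
  fixes f :: "'a \<Rightarrow> real"
  assumes "\<And>x. x \<in> space M \<Longrightarrow> \<bar>f x\<bar> \<le> S"
  shows "\<bar>\<integral>x. f x \<partial>M\<bar> \<le> S"
proof -
  have "\<bar>\<integral>x. f x \<partial>M\<bar> \<le> (\<integral>x. \<bar>f x\<bar> \<partial>M)"
    by (rule Bochner_Integration.integral_abs_bound)
  also have "\<dots> \<le> (\<integral>x. S \<partial>M)"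
    using assms by (intro integral_mono') (auto intro: order_trans[OF abs_ge_zero])
  finally show ?thesis
    by (simp add: prob_space)
qed

section \<open>Differentiation under the integral sign\<close>

lemma exp_difference_quotient_bound:
  fixes b h t S :: real
  assumes "h \<noteq> 0" "\<bar>h\<bar> \<le> 1" "\<bar>t\<bar> \<le> S"
  shows "\<bar>(exp ((b + h) * t) - exp (b * t)) / h - t * exp (b * t)\<bar>
    \<le> exp (\<bar>b\<bar> * S) * exp S * S\<^sup>2 * \<bar>h\<bar>"
proof -
  obtain s where s: "\<bar>s\<bar> \<le> \<bar>h * t\<bar>"
    and taylor: "exp (h * t) = 1 + h * t + exp s / 2 * (h * t)\<^sup>2"
    using Maclaurin_exp_le[of "h * t" 2] by (auto simp: numeral_2_eq_2)
  have "(exp ((b + h) * t) - exp (b * t)) / h - t * exp (b * t)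
      = exp (b * t) * (exp (h * t) - 1 - h * t) / h"
    using assms(1) by (simp add: distrib_right exp_add field_simps)
  also have "\<dots> = exp (b * t) * exp s / 2 * h * t\<^sup>2"
    using assms(1) by (simp add: taylor power2_eq_square field_simps)
  finally have eq: "(exp ((b + h) * t) - exp (b * t)) / h - t * exp (b * t)
      = exp (b * t) * exp s / 2 * h * t\<^sup>2" .
  have "\<bar>h\<bar> * \<bar>t\<bar> \<le> 1 * \<bar>t\<bar>"
    using assms(2) by (intro mult_right_mono) auto
  then have "\<bar>h * t\<bar> \<le> S"
    using assms(3) by (simp add: abs_mult)
  have "b * t \<le> \<bar>b\<bar> * S"
    using abs_ge_self[of "b * t"] mult_left_mono[OF assms(3) abs_ge_zero[of b]] by (simp add: abs_mult)
  then have "exp (b * t) * exp s \<le> exp (\<bar>b\<bar> * S) * exp S"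
    using s \<open>\<bar>h * t\<bar> \<le> S\<close> by (intro mult_mono) auto
  moreover have "0 < exp (b * t) * exp s"
    by simp
  ultimately have "exp (b * t) * exp s / 2 \<le> exp (\<bar>b\<bar> * S) * exp S"
    by linarith
  moreover have "t\<^sup>2 \<le> S\<^sup>2"
    using assms(3) by (metis abs_ge_zero abs_le_square_iff order_trans power2_abs abs_of_nonneg)
  ultimately have "exp (b * t) * exp s / 2 * t\<^sup>2 \<le> exp (\<bar>b\<bar> * S) * exp S * S\<^sup>2"
    by (intro mult_mono) auto
  then have "exp (b * t) * exp s / 2 * t\<^sup>2 * \<bar>h\<bar> \<le> exp (\<bar>b\<bar> * S) * exp S * S\<^sup>2 * \<bar>h\<bar>"
    by (rule mult_right_mono) simp
  then show ?thesis
    unfolding eq by (simp add: abs_mult mult_ac)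
qed

context
  fixes M :: "'a measure" and f g :: "'a \<Rightarrow> real" and S G :: real
  assumes finite_M: "finite_measure M"
    and [measurable]: "f \<in> borel_measurable M" "g \<in> borel_measurable M"
    and f_bound: "\<And>x. x \<in> space M \<Longrightarrow> \<bar>f x\<bar> \<le> S"
    and g_bound: "\<And>x. x \<in> space M \<Longrightarrow> \<bar>g x\<bar> \<le> G"
begin

interpretation finite_measure M
  by (rule finite_M)

lemma integrable_mult_exp:
  shows "integrable M (\<lambda>x. g x * exp (c * f x))"
    and "integrable M (\<lambda>x. g x * (f x * exp (c * f x)))"
proof -
  have exp_bound: "exp (c * f x) \<le> exp (\<bar>c\<bar> * S)" if "x \<in> space M" for x
    using abs_ge_self[of "c * f x"] mult_left_mono[OF f_bound[OF that] abs_ge_zero[of c]]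
    by (simp add: abs_mult)
  have bounds_nonneg: "0 \<le> G" "0 \<le> S" if "x \<in> space M" for x
    using f_bound[OF that] g_bound[OF that] by linarith+
  have "\<bar>g x * exp (c * f x)\<bar> \<le> G * exp (\<bar>c\<bar> * S)" if "x \<in> space M" for x
    using mult_mono[OF g_bound[OF that] exp_bound[OF that] bounds_nonneg(1)[OF that]]
    by (simp add: abs_mult)
  then show "integrable M (\<lambda>x. g x * exp (c * f x))"
    by (intro integrable_const_bound[where B="G * exp (\<bar>c\<bar> * S)"] AE_I2) (simp, measurable)
  have "\<bar>g x * (f x * exp (c * f x))\<bar> \<le> G * (S * exp (\<bar>c\<bar> * S))" if "x \<in> space M" for x
  proof -
    have "\<bar>f x\<bar> * exp (c * f x) \<le> S * exp (\<bar>c\<bar> * S)"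
      using mult_mono[OF f_bound[OF that] exp_bound[OF that] bounds_nonneg(2)[OF that]] by simp
    then show ?thesis
      using mult_mono[OF g_bound[OF that] _ bounds_nonneg(1)[OF that]] by (simp add: abs_mult)
  qed
  then show "integrable M (\<lambda>x. g x * (f x * exp (c * f x)))"
    by (intro integrable_const_bound[where B="G * (S * exp (\<bar>c\<bar> * S))"] AE_I2) (simp, measurable)
qed

lemma integral_exp_difference_quotient_le:
  assumes "h \<noteq> 0" "\<bar>h\<bar> \<le> 1"
  shows "\<bar>((\<integral>x. g x * exp ((b + h) * f x) \<partial>M) - (\<integral>x. g x * exp (b * f x) \<partial>M)) / h
      - (\<integral>x. g x * (f x * exp (b * f x)) \<partial>M)\<bar>
    \<le> G * exp (\<bar>b\<bar> * S) * exp S * S\<^sup>2 * measure M (space M) * \<bar>h\<bar>"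
proof -
  define R where "R x = g x * ((exp ((b + h) * f x) - exp (b * f x)) / h - f x * exp (b * f x))" for x
  have R_bound: "\<bar>R x\<bar> \<le> G * exp (\<bar>b\<bar> * S) * exp S * S\<^sup>2 * \<bar>h\<bar>" if "x \<in> space M" for x
  proof -
    have "\<bar>R x\<bar> = \<bar>g x\<bar> * \<bar>(exp ((b + h) * f x) - exp (b * f x)) / h - f x * exp (b * f x)\<bar>"
      by (simp add: R_def abs_mult)
    also have "\<dots> \<le> G * (exp (\<bar>b\<bar> * S) * exp S * S\<^sup>2 * \<bar>h\<bar>)"
      using g_bound[OF that]
      by (intro mult_mono exp_difference_quotient_bound[OF assms f_bound[OF that]]) auto
    finally show ?thesis
      by (simp add: mult_ac)
  qed
  have "((\<integral>x. g x * exp ((b + h) * f x) \<partial>M) - (\<integral>x. g x * exp (b * f x) \<partial>M)) / h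
      - (\<integral>x. g x * (f x * exp (b * f x)) \<partial>M) = (\<integral>x. R x \<partial>M)"
    using integrable_mult_exp by (simp add: R_def right_diff_distrib diff_divide_distrib)
  also have "\<bar>\<dots>\<bar> \<le> (\<integral>x. \<bar>R x\<bar> \<partial>M)"
    by (rule Bochner_Integration.integral_abs_bound)
  also have "\<dots> \<le> (\<integral>x. G * exp (\<bar>b\<bar> * S) * exp S * S\<^sup>2 * \<bar>h\<bar> \<partial>M)"
    using R_bound by (intro integral_mono') (auto intro: order_trans[OF abs_ge_zero])
  finally show ?thesis
    by (simp add: mult_ac)
qed

lemma has_real_derivative_integral_exp:
  "((\<lambda>c. \<integral>x. g x * exp (c * f x) \<partial>M) has_real_derivative
      (\<integral>x. g x * (f x * exp (b * f x)) \<partial>M)) (at b)"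
proof -
  define F where "F c = (\<integral>x. g x * exp (c * f x) \<partial>M)" for c
  define D where "D = (\<integral>x. g x * (f x * exp (b * f x)) \<partial>M)"
  define K where "K = G * exp (\<bar>b\<bar> * S) * exp S * S\<^sup>2 * measure M (space M)"
  have "norm ((F (b + h) - F b) / h - D) \<le> K * \<bar>h\<bar>" if "h \<noteq> 0" "\<bar>h\<bar> < 1" for h
    using integral_exp_difference_quotient_le[OF that(1)] that(2) by (simp add: F_def D_def K_def)
  then have "\<forall>\<^sub>F h in at 0. norm ((F (b + h) - F b) / h - D) \<le> K * \<bar>h\<bar>"
    unfolding eventually_at by (intro exI[of _ 1]) (simp add: dist_real_def)
  moreover have "((\<lambda>h. K * \<bar>h\<bar>) \<longlongrightarrow> 0) (at 0)"
    by (auto intro!: tendsto_eq_intros)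
  ultimately have "((\<lambda>h. (F (b + h) - F b) / h - D) \<longlongrightarrow> 0) (at 0)"
    by (rule Lim_null_comparison)
  then show ?thesis
    unfolding DERIV_def F_def D_def by (rule LIM_zero_cancel)
qed

end

section \<open>Gibbs distributions and thermodynamic integration\<close>

lemma integrable_exp_MX:
  fixes h :: "'a::euclidean_space \<Rightarrow> real"
  assumes [measurable]: "h \<in> borel_measurable MX" and h_bound: "\<And>x. x \<in> cubeX \<Longrightarrow> \<bar>h x\<bar> \<le> B"
  shows "integrable MX (\<lambda>x. exp (h x))"
  using h_bound by (intro MX.integrable_const_bound[where B="exp B"]) (auto simp: space_MX abs_le_iff)

lemma Zh_pos:
  fixes h :: "'a::euclidean_space \<Rightarrow> real"
  assumes [measurable]: "h \<in> borel_measurable MX" and h_bound: "\<And>x. x \<in> cubeX \<Longrightarrow> \<bar>h x\<bar> \<le> B"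
  shows "0 < Zh h"
proof -
  have "exp (- B) = (\<integral>x. exp (- B) \<partial>(MX :: 'a measure))"
    by (simp add: MX.prob_space)
  also have "\<dots> \<le> Zh h"
    unfolding Zh_def
    by (intro Bochner_Integration.integral_mono integrable_exp_MX[OF assms])
      (auto simp: space_MX abs_le_iff dest: h_bound)
  finally show ?thesis
    using exp_gt_zero less_le_trans by blast
qed

lemma prob_space_Ph:
  assumes [measurable]: "h \<in> borel_measurable MX" and h_bound: "\<And>x. x \<in> cubeX \<Longrightarrow> \<bar>h x\<bar> \<le> B"
  shows "prob_space (Ph h)"
proof
  have Zh: "0 < Zh h"
    using assms by (rule Zh_pos)
  then have "(\<integral>\<^sup>+x. ennreal (exp (h x) / Zh h) \<partial>MX) = ennreal (\<integral>x. exp (h x) / Zh h \<partial>MX)"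
    using integrable_exp_MX[OF assms] by (intro nn_integral_eq_integral) auto
  also have "(\<integral>x. exp (h x) / Zh h \<partial>MX) = 1"
    using Zh by (simp add: Zh_def)
  finally show "emeasure (Ph h) (space (Ph h)) = 1"
    by (simp add: Ph_def emeasure_density)
qed

lemma sets_Ph [measurable_cong]: "sets (Ph h) = sets MX"
  by (simp add: Ph_def)

lemma space_Ph: "space (Ph h) = cubeX"
  by (simp add: Ph_def space_MX)

lemma integral_Ph:
  assumes [measurable]: "g \<in> borel_measurable MX" "h \<in> borel_measurable MX" and "0 < Zh h"
  shows "(\<integral>x. g x \<partial>Ph h) = (\<integral>x. g x * exp (h x) \<partial>MX) / Zh h"
  using assms(3) by (simp add: Ph_def integral_density mult.commute)

context
  fixes f :: "'a::euclidean_space \<Rightarrow> real" and S :: real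
  assumes f_meas [measurable]: "f \<in> borel_measurable MX"
    and f_bound: "\<And>x. x \<in> cubeX \<Longrightarrow> \<bar>f x\<bar> \<le> S"
begin

lemma abs_scaled_le: "x \<in> cubeX \<Longrightarrow> \<bar>c * f x\<bar> \<le> \<bar>c\<bar> * S"
  using f_bound by (simp add: abs_mult mult_left_mono)

lemma Zh_scaled_pos: "0 < Zh (\<lambda>x. c * f x)"
  by (rule Zh_pos[OF _ abs_scaled_le]) simp

lemma prob_space_Ph_scaled: "prob_space (Ph (\<lambda>x. c * f x))"
  by (rule prob_space_Ph[OF _ abs_scaled_le]) simp

lemma abs_integral_Ph_scaled_le: "\<bar>\<integral>x. f x \<partial>Ph (\<lambda>x. c * f x)\<bar> \<le> S"
  by (rule prob_space.abs_integral_le[OF prob_space_Ph_scaled]) (simp_all add: space_Ph f_bound)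

lemma has_real_derivative_integral_exp_scaled:
  assumes [measurable]: "g \<in> borel_measurable MX" and "\<And>x. x \<in> cubeX \<Longrightarrow> \<bar>g x\<bar> \<le> G"
  shows "((\<lambda>c. \<integral>x. g x * exp (c * f x) \<partial>MX) has_real_derivative
      (\<integral>x. g x * (f x * exp (c * f x)) \<partial>MX)) (at c)"
  using assms(2) f_bound
  by (intro has_real_derivative_integral_exp[OF MX.finite_measure_axioms]) (auto simp: space_MX)

lemma has_real_derivative_Zh_scaled:
  "((\<lambda>c. Zh (\<lambda>x. c * f x)) has_real_derivative (\<integral>x. f x * exp (c * f x) \<partial>MX)) (at c)"
  using has_real_derivative_integral_exp_scaled[of "\<lambda>_. 1" 1] by (simp add: Zh_def)

lemma integral_Ph_scaled:
  "(\<integral>x. f x \<partial>Ph (\<lambda>x. c * f x)) = (\<integral>x. f x * exp (c * f x) \<partial>MX) / Zh (\<lambda>x. c * f x)"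
  by (rule integral_Ph[OF _ _ Zh_scaled_pos]) simp_all

lemma has_real_derivative_Lh_scaled:
  "((\<lambda>c. Lh (\<lambda>x. c * f x)) has_real_derivative (\<integral>x. f x \<partial>Ph (\<lambda>x. c * f x))) (at c)"
proof -
  from DERIV_ln_divide[OF Zh_scaled_pos] has_real_derivative_Zh_scaled
  have "((\<lambda>c. ln (Zh (\<lambda>x. c * f x))) has_real_derivative
      1 / Zh (\<lambda>x. c * f x) * (\<integral>x. f x * exp (c * f x) \<partial>MX)) (at c)"
    by (rule DERIV_chain2)
  then show ?thesis
    by (simp add: Lh_def integral_Ph_scaled)
qed

lemma continuous_on_Gibbs_mean: "continuous_on A (\<lambda>c. \<integral>x. f x \<partial>Ph (\<lambda>x. c * f x))"
proof -
  have "continuous_on A (\<lambda>c. \<integral>x. f x * exp (c * f x) \<partial>MX)"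
    using has_real_derivative_integral_exp_scaled[OF f_meas f_bound]
    by (meson DERIV_isCont continuous_at_imp_continuous_on)
  moreover have "continuous_on A (\<lambda>c. Zh (\<lambda>x. c * f x))"
    using has_real_derivative_Zh_scaled by (meson DERIV_isCont continuous_at_imp_continuous_on)
  ultimately show ?thesis
    unfolding integral_Ph_scaled using Zh_scaled_pos
    by (intro continuous_on_divide) (auto simp: less_imp_neq[symmetric])
qed

lemma integrable_Gibbs_mean: "integrable U01 (\<lambda>\<beta>. \<integral>x. f x \<partial>Ph (\<lambda>x. \<beta> * f x))"
proof (rule U01.integrable_const_bound[where B=S])
  show "(\<lambda>\<beta>. \<integral>x. f x \<partial>Ph (\<lambda>x. \<beta> * f x)) \<in> borel_measurable U01"
    unfolding U01_def
    by (rule measurable_restrict_space1)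
      (simp add: borel_measurable_continuous_onI[OF continuous_on_Gibbs_mean])
qed (simp add: abs_integral_Ph_scaled_le)

lemma Lh_eq_integral_Gibbs_mean: "Lh f = (\<integral>\<beta>. (\<integral>x. f x \<partial>Ph (\<lambda>x. \<beta> * f x)) \<partial>U01)"
proof -
  have "(\<integral>\<beta>. (\<integral>x. f x \<partial>Ph (\<lambda>x. \<beta> * f x)) \<partial>U01)
      = (\<integral>\<beta>. indicator {0..1} \<beta> *\<^sub>R (\<integral>x. f x \<partial>Ph (\<lambda>x. \<beta> * f x)) \<partial>lborel)"
    unfolding U01_def by (rule integral_restrict_space) simp
  also have "\<dots> = Lh (\<lambda>x. 1 * f x) - Lh (\<lambda>x. 0 * f x)"
    using has_real_derivative_Lh_scaled continuous_on_Gibbs_mean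
    by (intro integral_FTC_atLeastAtMost)
      (auto simp: has_real_derivative_iff_has_vector_derivative[symmetric] has_field_derivative_at_within)
  also have "\<dots> = Lh f"
    by (simp add: Lh_def Zh_def MX.prob_space)
  finally show ?thesis ..
qed

end

section \<open>Comparison of means in total variation\<close>

lemma abs_measure_diff_le_1:
  assumes "prob_space P" "prob_space Q"
  shows "\<bar>measure P A - measure Q A\<bar> \<le> 1"
  using prob_space.prob_le_1[OF assms(1), of A] prob_space.prob_le_1[OF assms(2), of A]
    measure_nonneg[of P A] measure_nonneg[of Q A]
  by linarith

lemma dTV_ge:
  assumes "prob_space P" "prob_space Q" "A \<in> sets P"
  shows "\<bar>measure P A - measure Q A\<bar> \<le> dTV P Q"
  unfolding dTV_def
proof (rule cSup_upper)
  show "bdd_above {\<bar>measure P A - measure Q A\<bar> |A. A \<in> sets P}"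
    using abs_measure_diff_le_1[OF assms(1,2)] by (intro bdd_aboveI[where M=1]) auto
qed (use assms(3) in blast)

lemma dTV_le_1:
  assumes "prob_space P" "prob_space Q"
  shows "dTV P Q \<le> 1"
  unfolding dTV_def using abs_measure_diff_le_1[OF assms] by (intro cSup_least) auto

lemma card_nat_le_real:
  fixes x :: real
  assumes "0 \<le> x" "x \<le> real n"
  shows "card {k \<in> {1..n}. real k \<le> x} = nat \<lfloor>x\<rfloor>"
proof -
  have iff: "real k \<le> x \<longleftrightarrow> k \<le> nat \<lfloor>x\<rfloor>" for k
    using assms(1) by (simp add: le_nat_iff le_floor_iff)
  have "{k \<in> {1..n}. real k \<le> x} = {1..nat \<lfloor>x\<rfloor>}"
    using assms(2) by (auto simp: iff[symmetric] intro: order_trans)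
  then show ?thesis by simp
qed

lemma staircase_bounds:
  fixes t :: real
  assumes "0 \<le> t" "t \<le> 1" "0 < n"
  shows "t - 1 / real n \<le> (\<Sum>k\<in>{1..n}. of_bool (real k \<le> real n * t)) / real n"
    and "(\<Sum>k\<in>{1..n}. of_bool (real k \<le> real n * t)) / real n \<le> t"
proof -
  have "(\<Sum>k\<in>{1..n}. of_bool (real k \<le> real n * t) :: real)
      = real (card ({1..n} \<inter> {k. real k \<le> real n * t}))"
    by (rule sum_of_bool_eq) simp_all
  also have "{1..n} \<inter> {k. real k \<le> real n * t} = {k \<in> {1..n}. real k \<le> real n * t}"
    by blast
  also have "card \<dots> = nat \<lfloor>real n * t\<rfloor>"
    using assms by (intro card_nat_le_real) (auto simp: mult_left_le)
  moreover have "0 \<le> real n * t"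
    using assms by simp
  then have "real n * t - 1 \<le> real (nat \<lfloor>real n * t\<rfloor>)" "real (nat \<lfloor>real n * t\<rfloor>) \<le> real n * t"
    by linarith+
  moreover have "(t - 1 / real n) * real n = real n * t - 1"
    using assms(3) by (simp add: algebra_simps)
  ultimately show "t - 1 / real n \<le> (\<Sum>k\<in>{1..n}. of_bool (real k \<le> real n * t)) / real n"
    "(\<Sum>k\<in>{1..n}. of_bool (real k \<le> real n * t)) / real n \<le> t"
    using assms(3) by (simp_all add: pos_le_divide_eq pos_divide_le_eq mult.commute)
qed

lemma integral_staircase_bounds:
  fixes h :: "'a \<Rightarrow> real"
  assumes "prob_space M" and [measurable]: "h \<in> borel_measurable M"
    and h_range: "\<And>x. x \<in> space M \<Longrightarrow> 0 \<le> h x \<and> h x \<le> 1" and "0 < n"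
  defines "avg \<equiv> (\<Sum>k\<in>{1..n}. measure M {x \<in> space M. real k \<le> real n * h x}) / real n"
  shows "avg \<le> (\<integral>x. h x \<partial>M)" and "(\<integral>x. h x \<partial>M) \<le> avg + 1 / real n"
proof -
  interpret prob_space M by fact
  \<comment> \<open>\<open>s\<close> is the staircase \<open>\<lfloor>n h\<rfloor> / n\<close>, an average of indicators of superlevel sets of \<open>h\<close>.\<close>
  define s where "s x = (\<Sum>k\<in>{1..n}. indicator {x \<in> space M. real k \<le> real n * h x} x) / real n"
    for x
  have sets: "{x \<in> space M. real k \<le> real n * h x} \<in> sets M" for k
    by measurable
  have s_eq: "s x = (\<Sum>k\<in>{1..n}. of_bool (real k \<le> real n * h x)) / real n" if "x \<in> space M" for x
    using that by (simp add: s_def indicator_def of_bool_def)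
  have int_s: "integrable M s"
    unfolding s_def[abs_def] using sets by (auto simp: emeasure_eq_measure)
  have int_h: "integrable M h"
    using h_range by (intro integrable_const_bound[where B=1] AE_I2) auto
  have integral_s: "(\<integral>x. s x \<partial>M) = avg"
    using sets by (simp add: s_def avg_def emeasure_eq_measure)
  have s_le: "s x \<le> h x" if "x \<in> space M" for x
    unfolding s_eq[OF that] using h_range[OF that] by (intro staircase_bounds(2) assms(4)) auto
  have le_s: "h x \<le> s x + 1 / real n" if "x \<in> space M" for x
    using staircase_bounds(1)[OF _ _ assms(4), of "h x"] h_range[OF that]
    unfolding s_eq[OF that] by linarith
  have "(\<integral>x. s x \<partial>M) \<le> (\<integral>x. h x \<partial>M)"
    using int_s int_h s_le by (rule integral_mono)
  moreover have "(\<integral>x. h x \<partial>M) \<le> (\<integral>x. s x + 1 / real n \<partial>M)"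
    using int_s int_h le_s by (intro integral_mono) auto
  ultimately show "avg \<le> (\<integral>x. h x \<partial>M)" "(\<integral>x. h x \<partial>M) \<le> avg + 1 / real n"
    using int_s by (simp_all add: integral_s prob_space)
qed

lemma integral_diff_le_dTV_unit:
  fixes h :: "'a \<Rightarrow> real"
  assumes P: "prob_space P" and Q: "prob_space Q" and sets_Q: "sets Q = sets P"
    and h_meas [measurable]: "h \<in> borel_measurable P"
    and h_range: "\<And>x. x \<in> space P \<Longrightarrow> 0 \<le> h x \<and> h x \<le> 1"
  shows "\<bar>(\<integral>x. h x \<partial>P) - (\<integral>x. h x \<partial>Q)\<bar> \<le> dTV P Q"
proof (rule field_le_epsilon)
  fix e :: real assume "0 < e"
  then obtain n :: nat where n: "0 < n" "1 / real n < e"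
    by (metis reals_Archimedean inverse_eq_divide zero_less_Suc)
  define A where "A k = {x \<in> space P. real k \<le> real n * h x}" for k
  have space_Q: "space Q = space P"
    by (rule sets_eq_imp_space_eq[OF sets_Q])
  have h_Q: "h \<in> borel_measurable Q"
    by (simp add: measurable_cong_sets[OF sets_Q refl])
  have h_range_Q: "\<And>x. x \<in> space Q \<Longrightarrow> 0 \<le> h x \<and> h x \<le> 1"
    using h_range by (simp add: space_Q)
  have P_bounds: "(\<Sum>k\<in>{1..n}. measure P (A k)) / real n \<le> (\<integral>x. h x \<partial>P)"
    "(\<integral>x. h x \<partial>P) \<le> (\<Sum>k\<in>{1..n}. measure P (A k)) / real n + 1 / real n"
    unfolding A_def using integral_staircase_bounds[OF P h_meas h_range n(1)] by simp_all
  have Q_bounds: "(\<Sum>k\<in>{1..n}. measure Q (A k)) / real n \<le> (\<integral>x. h x \<partial>Q)"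
    "(\<integral>x. h x \<partial>Q) \<le> (\<Sum>k\<in>{1..n}. measure Q (A k)) / real n + 1 / real n"
    unfolding A_def space_Q[symmetric] using integral_staircase_bounds[OF Q h_Q h_range_Q n(1)] by simp_all
  have "\<bar>(\<Sum>k\<in>{1..n}. measure P (A k)) - (\<Sum>k\<in>{1..n}. measure Q (A k))\<bar>
      \<le> (\<Sum>k\<in>{1..n}. \<bar>measure P (A k) - measure Q (A k)\<bar>)"
    by (simp add: sum_subtractf[symmetric] sum_abs)
  also have "\<dots> \<le> real n * dTV P Q"
    using sum_bounded_above[of "{1..n}" "\<lambda>k. \<bar>measure P (A k) - measure Q (A k)\<bar>" "dTV P Q"]
    by (simp add: dTV_ge[OF P Q] A_def)
  finally have "\<bar>(\<Sum>k\<in>{1..n}. measure P (A k)) / real n - (\<Sum>k\<in>{1..n}. measure Q (A k)) / real n\<bar>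
      \<le> dTV P Q"
    using n(1) by (simp add: diff_divide_distrib[symmetric] divide_le_eq mult.commute)
  then show "\<bar>(\<integral>x. h x \<partial>P) - (\<integral>x. h x \<partial>Q)\<bar> \<le> dTV P Q + e"
    using P_bounds Q_bounds n(2) by (simp only: abs_le_iff) linarith
qed

lemma integral_diff_le_dTV:
  fixes f :: "'a \<Rightarrow> real"
  assumes P: "prob_space P" and Q: "prob_space Q" and sets_Q: "sets Q = sets P"
    and [measurable]: "f \<in> borel_measurable P"
    and f_bound: "\<And>x. x \<in> space P \<Longrightarrow> \<bar>f x\<bar> \<le> S"
  shows "\<bar>(\<integral>x. f x \<partial>P) - (\<integral>x. f x \<partial>Q)\<bar> \<le> 2 * S * dTV P Q"
proof -
  obtain x0 where "x0 \<in> space P"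
    using prob_space.not_empty[OF P] by blast
  then consider "S = 0" | "0 < S"
    using f_bound[of x0] by linarith
  then show ?thesis
  proof cases
    case 1
    then have "\<And>x. x \<in> space P \<Longrightarrow> f x = 0"
      using f_bound by fastforce
    then have "(\<integral>x. f x \<partial>P) = 0" "(\<integral>x. f x \<partial>Q) = 0"
      using sets_eq_imp_space_eq[OF sets_Q] by (auto intro!: integral_eq_zero_AE)
    then show ?thesis
      using 1 by simp
  next
    case 2
    define h where "h x = (f x + S) / (2 * S)" for x
    have integral_h: "(\<integral>x. h x \<partial>M) = ((\<integral>x. f x \<partial>M) + S) / (2 * S)"
      if "prob_space M" "sets M = sets P" for M
    proof -
      interpret prob_space M by fact
      have "integrable M f"
        using f_bound sets_eq_imp_space_eq[OF that(2)]
        by (intro integrable_const_bound[where B=S]) (auto simp: measurable_cong_sets[OF that(2) refl])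
      then show ?thesis
        by (simp add: h_def prob_space)
    qed
    have "\<bar>(\<integral>x. h x \<partial>P) - (\<integral>x. h x \<partial>Q)\<bar> \<le> dTV P Q"
      using 2 by (intro integral_diff_le_dTV_unit[OF P Q sets_Q])
        (auto simp: h_def abs_le_iff field_simps dest: f_bound)
    then show ?thesis
      using 2 by (simp add: integral_h[OF P] integral_h[OF Q sets_Q] diff_divide_distrib[symmetric]
          divide_le_eq mult.commute)
  qed
qed

section \<open>Comparison of means in Wasserstein distance\<close>

lemma (in pair_prob_space) distr_pair_snd: "distr (M1 \<Otimes>\<^sub>M M2) M2 snd = M2"
proof (intro measure_eqI)
  fix A assume A: "A \<in> sets (distr (M1 \<Otimes>\<^sub>M M2) M2 snd)"
  then have "emeasure (distr (M1 \<Otimes>\<^sub>M M2) M2 snd) A = emeasure (M1 \<Otimes>\<^sub>M M2) (space M1 \<times> A)"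
    by (auto simp: emeasure_distr space_pair_measure dest: sets.sets_into_space
        intro!: arg_cong2[where f=emeasure])
  with A show "emeasure (distr (M1 \<Otimes>\<^sub>M M2) M2 snd) A = emeasure M2 A"
    by (simp add: M2.emeasure_pair_measure_Times M1.emeasure_space_1)
qed simp

lemma pair_measure_in_couplings:
  assumes "prob_space P" "prob_space Q" and sets_P: "sets P = sets M" and sets_Q: "sets Q = sets M"
  shows "P \<Otimes>\<^sub>M Q \<in> couplings M P Q"
proof -
  interpret P: prob_space P by fact
  interpret Q: prob_space Q by fact
  interpret PQ: pair_prob_space P Q ..
  have "distr (P \<Otimes>\<^sub>M Q) M fst = distr (P \<Otimes>\<^sub>M Q) P fst"
    using sets_P by (intro distr_cong) simp_all
  also have "\<dots> = P"
    by (rule Q.distr_pair_fst)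
  finally have "distr (P \<Otimes>\<^sub>M Q) M fst = P" .
  moreover have "distr (P \<Otimes>\<^sub>M Q) M snd = distr (P \<Otimes>\<^sub>M Q) Q snd"
    using sets_Q by (intro distr_cong) simp_all
  moreover have "\<dots> = Q"
    by (rule PQ.distr_pair_snd)
  ultimately show ?thesis
    using sets_pair_measure_cong[OF sets_P sets_Q] PQ.prob_space_axioms by (simp add: couplings_def)
qed

lemma couplingsD:
  assumes "\<pi> \<in> couplings M P Q"
  shows "prob_space \<pi>" and "space \<pi> = space M \<times> space M"
    and "fst \<in> \<pi> \<rightarrow>\<^sub>M M" and "snd \<in> \<pi> \<rightarrow>\<^sub>M M"
    and "distr \<pi> M fst = P" and "distr \<pi> M snd = Q"
proof -
  have sets_\<pi>: "sets \<pi> = sets (M \<Otimes>\<^sub>M M)"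
    using assms by (simp add: couplings_def)
  show "space \<pi> = space M \<times> space M"
    using sets_eq_imp_space_eq[OF sets_\<pi>] by (simp add: space_pair_measure)
  show "fst \<in> \<pi> \<rightarrow>\<^sub>M M" "snd \<in> \<pi> \<rightarrow>\<^sub>M M"
    by (simp_all add: measurable_cong_sets[OF sets_\<pi> refl])
qed (use assms in \<open>simp_all add: couplings_def\<close>)

context
  fixes M :: "'b::{metric_space, second_countable_topology} measure"
  assumes borel_id: "(\<lambda>x. x) \<in> M \<rightarrow>\<^sub>M borel" and bounded_space: "bounded (space M)"
begin

lemma integral_dist_coupling:
  assumes "\<pi> \<in> couplings M P Q"
  shows "integrable \<pi> (\<lambda>z. dist (fst z) (snd z))"
    and "(\<integral>z. dist (fst z) (snd z) \<partial>\<pi>) \<le> diameter (space M)"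
proof -
  interpret prob_space \<pi>
    using assms by (rule couplingsD)
  have [measurable]: "(\<lambda>z. dist (fst z) (snd z)) \<in> borel_measurable \<pi>"
    using couplingsD(3,4)[OF assms] by (intro borel_measurable_dist measurable_compose[OF _ borel_id])
  have dist_le: "dist (fst z) (snd z) \<le> diameter (space M)" if "z \<in> space \<pi>" for z
    using that bounded_space by (auto simp: couplingsD(2)[OF assms] intro: diameter_bounded_bound)
  then show "integrable \<pi> (\<lambda>z. dist (fst z) (snd z))"
    by (intro integrable_const_bound[where B="diameter (space M)"]) auto
  then show "(\<integral>z. dist (fst z) (snd z) \<partial>\<pi>) \<le> diameter (space M)"
    using dist_le by (intro integral_le_const) auto
qed

lemma W1_le_diameter:
  assumes "prob_space P" "prob_space Q" "sets P = sets M" "sets Q = sets M"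
  shows "W1 M P Q \<le> diameter (space M)"
  unfolding W1_def
proof (rule cInf_lower2)
  show "(\<integral>z. dist (fst z) (snd z) \<partial>(P \<Otimes>\<^sub>M Q))
      \<in> {integral\<^sup>L \<pi> (\<lambda>z. dist (fst z) (snd z)) |\<pi>. \<pi> \<in> couplings M P Q}"
    using pair_measure_in_couplings[OF assms] by blast
  show "bdd_below {integral\<^sup>L \<pi> (\<lambda>z. dist (fst z) (snd z)) |\<pi>. \<pi> \<in> couplings M P Q}"
    by (intro bdd_belowI[where m=0]) auto
qed (rule integral_dist_coupling(2)[OF pair_measure_in_couplings[OF assms]])

lemma integral_diff_le_coupling:
  fixes f :: "'b \<Rightarrow> real"
  assumes \<pi>: "\<pi> \<in> couplings M P Q"
    and [measurable]: "f \<in> borel_measurable M" and lip: "lipschitz_on L (space M) f"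
  shows "\<bar>(\<integral>x. f x \<partial>P) - (\<integral>x. f x \<partial>Q)\<bar> \<le> L * (\<integral>z. dist (fst z) (snd z) \<partial>\<pi>)"
proof -
  interpret prob_space \<pi>
    using \<pi> by (rule couplingsD)
  note space_\<pi> = couplingsD(2)[OF \<pi>]
  have [measurable]: "fst \<in> \<pi> \<rightarrow>\<^sub>M M" "snd \<in> \<pi> \<rightarrow>\<^sub>M M"
    using \<pi> by (rule couplingsD)+
  obtain x0 where x0: "x0 \<in> space M"
    using not_empty by (auto simp: space_\<pi>)
  define C where "C = \<bar>f x0\<bar> + L * diameter (space M)"
  have f_bound: "\<bar>f x\<bar> \<le> C" if "x \<in> space M" for x
    using lipschitz_onD[OF lip that x0] diameter_bounded_bound[OF bounded_space that x0]
      lipschitz_on_nonneg[OF lip]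
    unfolding C_def by (smt (verit, best) dist_real_def mult_left_mono)
  have integrable: "integrable \<pi> (\<lambda>z. f (fst z))" "integrable \<pi> (\<lambda>z. f (snd z))"
    using f_bound by (auto simp: space_\<pi> intro!: integrable_const_bound[where B=C])
  have "(\<integral>x. f x \<partial>P) - (\<integral>x. f x \<partial>Q) = (\<integral>z. f (fst z) - f (snd z) \<partial>\<pi>)"
    using integrable
    by (simp add: couplingsD(5,6)[OF \<pi>, symmetric] integral_distr Bochner_Integration.integral_diff)
  also have "\<bar>\<dots>\<bar> \<le> (\<integral>z. \<bar>f (fst z) - f (snd z)\<bar> \<partial>\<pi>)"
    by (rule Bochner_Integration.integral_abs_bound)
  also have "\<dots> \<le> (\<integral>z. L * dist (fst z) (snd z) \<partial>\<pi>)"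
    using integral_dist_coupling(1)[OF \<pi>] lipschitz_onD[OF lip] lipschitz_on_nonneg[OF lip]
    by (intro integral_mono') (auto simp: space_\<pi> dist_real_def)
  finally show ?thesis
    by simp
qed

lemma integral_diff_le_W1:
  fixes f :: "'b \<Rightarrow> real"
  assumes "prob_space P" "prob_space Q" "sets P = sets M" "sets Q = sets M"
    and [measurable]: "f \<in> borel_measurable M" and lip: "lipschitz_on L (space M) f"
  shows "\<bar>(\<integral>x. f x \<partial>P) - (\<integral>x. f x \<partial>Q)\<bar> \<le> L * W1 M P Q"
proof (cases "L = 0")
  case True
  then show ?thesis
    using integral_diff_le_coupling[OF pair_measure_in_couplings[OF assms(1-4)] _ lip] by simp
next
  case False
  then have "0 < L"
    using lipschitz_on_nonneg[OF lip] by simp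
  have "\<bar>(\<integral>x. f x \<partial>P) - (\<integral>x. f x \<partial>Q)\<bar> / L \<le> W1 M P Q"
    unfolding W1_def using pair_measure_in_couplings[OF assms(1-4)] \<open>0 < L\<close>
      integral_diff_le_coupling[OF _ _ lip]
    by (intro cInf_greatest) (auto simp: divide_le_eq mult.commute)
  then show ?thesis
    using \<open>0 < L\<close> by (simp add: divide_le_eq mult.commute)
qed

end

lemma lipschitz_on_lipconst:
  assumes "\<exists>C. lipschitz_on C cubeX f"
  shows "lipschitz_on (lipconst f) cubeX f"
proof -
  let ?A = "{C. lipschitz_on C cubeX f}"
  have "?A \<noteq> {}"
    using assms by blast
  have "0 \<le> lipconst f"
    unfolding lipconst_def using \<open>?A \<noteq> {}\<close> by (intro cInf_greatest) (auto dest: lipschitz_on_nonneg)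
  moreover have "dist (f x) (f y) \<le> lipconst f * dist x y" if "x \<in> cubeX" "y \<in> cubeX" for x y
  proof (cases "x = y")
    case False
    then have "dist (f x) (f y) / dist x y \<le> lipconst f"
      unfolding lipconst_def using \<open>?A \<noteq> {}\<close> lipschitz_onD[OF _ that]
      by (intro cInf_greatest) (auto simp: divide_le_eq)
    then show ?thesis
      using False by (simp add: divide_le_eq)
  qed simp
  ultimately show ?thesis
    by (simp add: lipschitz_on_def)
qed

section \<open>The randomized estimator\<close>

lemma indep_vars_PiM_components:
  assumes M: "\<And>i. i \<in> I \<Longrightarrow> prob_space (M i)" and "I \<noteq> {}"
  shows "prob_space.indep_vars (PiM I M) M (\<lambda>i \<omega>. \<omega> i) I"
proof -
  interpret prob_space "PiM I M"
    using M by (rule prob_space_PiM)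
  have "distr (PiM I M) (PiM I M) (\<lambda>\<omega>. restrict \<omega> I) = distr (PiM I M) (PiM I M) (\<lambda>\<omega>. \<omega>)"
    by (rule distr_cong) (auto simp: space_PiM)
  also have "\<dots> = PiM I (\<lambda>i. distr (PiM I M) (M i) (\<lambda>\<omega>. \<omega> i))"
    using M by (simp add: distr_PiM_component cong: PiM_cong)
  finally show ?thesis
    using \<open>I \<noteq> {}\<close> by (subst indep_vars_iff_distr_eq_PiM') simp_all
qed

locale sampler =
  fixes Pt :: "real \<Rightarrow> 'a::euclidean_space measure"
  assumes Pt_kernel [measurable]: "Pt \<in> U01 \<rightarrow>\<^sub>M subprob_algebra MX"
    and prob_space_Pt: "\<And>\<beta>. \<beta> \<in> {0..1} \<Longrightarrow> prob_space (Pt \<beta>)"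
begin

lemma sets_Pt: "\<beta> \<in> {0..1} \<Longrightarrow> sets (Pt \<beta>) = sets MX"
  using sets_kernel[OF Pt_kernel] by (simp add: space_U01)

lemma space_Pt: "\<beta> \<in> {0..1} \<Longrightarrow> space (Pt \<beta>) = cubeX"
  using sets_eq_imp_space_eq[OF sets_Pt] by (simp add: space_MX)

definition pair_kernel :: "real \<Rightarrow> (real \<times> 'a) measure" where
  "pair_kernel \<beta> = Pt \<beta> \<bind> (\<lambda>x. return (U01 \<Otimes>\<^sub>M MX) (\<beta>, x))"

lemma pairlaw_eq_bind: "pairlaw Pt = U01 \<bind> pair_kernel"
  by (simp add: pairlaw_def pair_kernel_def[abs_def])

lemma measurable_return_pair:
  "\<beta> \<in> {0..1} \<Longrightarrow> (\<lambda>x. return (U01 \<Otimes>\<^sub>M MX) (\<beta>, x)) \<in> Pt \<beta> \<rightarrow>\<^sub>M subprob_algebra (U01 \<Otimes>\<^sub>M MX)"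
  by (simp add: measurable_cong_sets[OF sets_Pt refl] space_U01)

lemma measurable_pair_kernel [measurable]: "pair_kernel \<in> U01 \<rightarrow>\<^sub>M subprob_algebra (U01 \<Otimes>\<^sub>M MX)"
  unfolding pair_kernel_def[abs_def]
  by (rule measurable_bind'[OF Pt_kernel]) (simp add: case_prod_beta')

lemma prob_space_pair_kernel: "\<beta> \<in> {0..1} \<Longrightarrow> prob_space (pair_kernel \<beta>)"
  unfolding pair_kernel_def
  by (rule prob_space.prob_space_bind[OF prob_space_Pt _ measurable_return_pair])
    (auto intro!: prob_space_return simp: space_pair_measure space_U01 space_Pt space_MX)

lemma sets_pairlaw: "sets (pairlaw Pt) = sets (U01 \<Otimes>\<^sub>M MX)"
  unfolding pairlaw_eq_bind by (rule sets_bind) (auto simp: space_U01 sets_kernel[OF measurable_pair_kernel])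

lemma prob_space_pairlaw: "prob_space (pairlaw Pt)"
  unfolding pairlaw_eq_bind
  by (rule prob_space.prob_space_bind[OF prob_space_U01 _ measurable_pair_kernel])
    (auto simp: space_U01 prob_space_pair_kernel)

lemma prob_space_sampleN: "prob_space (sampleN N Pt)"
  unfolding sampleN_def by (intro prob_space_PiM prob_space_pairlaw)

lemma distr_sample_component: "i < N \<Longrightarrow> distr (sampleN N Pt) (pairlaw Pt) (\<lambda>\<omega>. \<omega> i) = pairlaw Pt"
  unfolding sampleN_def by (intro distr_PiM_component prob_space_pairlaw) auto

lemma snd_sample_in_cubeX: "\<omega> \<in> space (sampleN N Pt) \<Longrightarrow> i < N \<Longrightarrow> snd (\<omega> i) \<in> cubeX"
  by (auto simp: sampleN_def space_PiM sets_eq_imp_space_eq[OF sets_pairlaw]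
      space_pair_measure space_MX PiE_iff mem_Times_iff)

context
  fixes f :: "'a \<Rightarrow> real" and S :: real
  assumes f_meas [measurable]: "f \<in> borel_measurable MX"
    and f_bound: "\<And>x. x \<in> cubeX \<Longrightarrow> \<bar>f x\<bar> \<le> S"
begin

lemma measurable_pairlaw_snd [measurable]: "(\<lambda>z. f (snd z)) \<in> borel_measurable (pairlaw Pt)"
  unfolding measurable_cong_sets[OF sets_pairlaw refl] by measurable

lemma measurable_sample_term [measurable]:
  "i < N \<Longrightarrow> (\<lambda>\<omega>. f (snd (\<omega> i))) \<in> borel_measurable (sampleN N Pt)"
  unfolding sampleN_def by (rule measurable_compose[OF measurable_component_singleton]) simp_all

lemma measurable_Lest [measurable]: "Lest N f \<in> borel_measurable (sampleN N Pt)"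
  unfolding Lest_def[abs_def] by measurable

lemma iid_sample_terms:
  assumes "N \<ge> 1"
  shows "iid_interval_bounded_random_variables (sampleN N Pt) {..<N}
    (\<lambda>i \<omega>. f (snd (\<omega> i))) (\<lambda>\<omega>. f (snd (\<omega> 0))) (- S) S"
proof -
  interpret prob_space "sampleN N Pt"
    by (rule prob_space_sampleN)
  have indep: "indep_vars (\<lambda>_. pairlaw Pt) (\<lambda>i \<omega>. \<omega> i) {..<N}"
    using assms unfolding sampleN_def
    by (intro indep_vars_PiM_components prob_space_pairlaw) (auto simp: lessThan_empty_iff)
  have distr_term: "distr (sampleN N Pt) borel (\<lambda>\<omega>. f (snd (\<omega> i))) = distr (pairlaw Pt) borel (\<lambda>z. f (snd z))"
    if "i < N" for i
  proof -
    have "distr (sampleN N Pt) borel (\<lambda>\<omega>. f (snd (\<omega> i)))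
        = distr (distr (sampleN N Pt) (pairlaw Pt) (\<lambda>\<omega>. \<omega> i)) borel (\<lambda>z. f (snd z))"
      using that unfolding sampleN_def
      by (subst distr_distr) (auto simp: comp_def)
    also have "distr (sampleN N Pt) (pairlaw Pt) (\<lambda>\<omega>. \<omega> i) = pairlaw Pt"
      using that by (rule distr_sample_component)
    finally show ?thesis .
  qed
  show ?thesis
  proof
    show "indep_vars (\<lambda>_. borel) (\<lambda>i \<omega>. f (snd (\<omega> i))) {..<N}"
      using indep by (rule indep_vars_compose2) simp
    show "distr (sampleN N Pt) borel (\<lambda>\<omega>. f (snd (\<omega> i))) = distr (sampleN N Pt) borel (\<lambda>\<omega>. f (snd (\<omega> 0)))"
      if "i \<in> {..<N}" for i
      using that assms by (simp add: distr_term)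
    show "AE \<omega> in sampleN N Pt. f (snd (\<omega> 0)) \<in> {- S..S}"
    proof (rule AE_I2)
      fix \<omega> assume "\<omega> \<in> space (sampleN N Pt)"
      then have "\<bar>f (snd (\<omega> 0))\<bar> \<le> S"
        using assms by (intro f_bound snd_sample_in_cubeX) auto
      then show "f (snd (\<omega> 0)) \<in> {- S..S}"
        by (simp add: abs_le_iff)
    qed
  qed (use assms in simp_all)
qed

lemma integral_pairlaw_snd: "(\<integral>z. f (snd z) \<partial>pairlaw Pt) = (\<integral>\<beta>. (\<integral>x. f x \<partial>Pt \<beta>) \<partial>U01)"
proof -
  have "(\<integral>z. f (snd z) \<partial>pairlaw Pt) = (\<integral>\<beta>. (\<integral>z. f (snd z) \<partial>pair_kernel \<beta>) \<partial>U01)"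
    unfolding pairlaw_eq_bind
    by (rule integral_bind[OF _ _ measurable_pair_kernel, where B=S and B'=1])
      (auto simp: space_pair_measure space_U01 space_MX f_bound U01.finite_measure_axioms
        intro!: prob_space.emeasure_le_1 prob_space_pair_kernel)
  also have "\<dots> = (\<integral>\<beta>. (\<integral>x. f x \<partial>Pt \<beta>) \<partial>U01)"
  proof (intro Bochner_Integration.integral_cong refl)
    fix \<beta> assume "\<beta> \<in> space U01"
    then have \<beta>: "\<beta> \<in> {0..1}"
      by (simp add: space_U01)
    interpret Pt: prob_space "Pt \<beta>"
      using \<beta> by (rule prob_space_Pt)
    have "(\<integral>z. f (snd z) \<partial>pair_kernel \<beta>)
        = (\<integral>x. (\<integral>z. f (snd z) \<partial>return (U01 \<Otimes>\<^sub>M MX) (\<beta>, x)) \<partial>Pt \<beta>)"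
      unfolding pair_kernel_def
      by (rule integral_bind[OF _ _ measurable_return_pair[OF \<beta>], where B=S and B'=1])
        (use \<beta> in \<open>auto simp: space_pair_measure space_U01 space_MX space_Pt f_bound
          Pt.finite_measure_axioms intro!: prob_space.emeasure_le_1 prob_space_return\<close>)
    also have "\<dots> = (\<integral>x. f x \<partial>Pt \<beta>)"
      using \<beta> by (intro Bochner_Integration.integral_cong refl)
        (simp add: integral_return space_pair_measure space_U01 space_MX space_Pt)
    finally show "(\<integral>z. f (snd z) \<partial>pair_kernel \<beta>) = (\<integral>x. f x \<partial>Pt \<beta>)" .
  qed
  finally show ?thesis .
qed

lemma integral_sample_term:
  assumes "i < N"
  shows "(\<integral>\<omega>. f (snd (\<omega> i)) \<partial>sampleN N Pt) = (\<integral>z. f (snd z) \<partial>pairlaw Pt)"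
proof -
  have "(\<lambda>\<omega>. \<omega> i) \<in> sampleN N Pt \<rightarrow>\<^sub>M pairlaw Pt"
    using assms unfolding sampleN_def by simp
  then show ?thesis
    using integral_distr[of "\<lambda>\<omega>. \<omega> i" "sampleN N Pt" "pairlaw Pt" "\<lambda>z. f (snd z)"]
    by (simp add: distr_sample_component[OF assms])
qed

lemma integral_Lest:
  assumes "N \<ge> 1"
  shows "(\<integral>\<omega>. Lest N f \<omega> \<partial>sampleN N Pt) = (\<integral>\<beta>. (\<integral>x. f x \<partial>Pt \<beta>) \<partial>U01)"
proof -
  interpret iid_interval_bounded_random_variables "sampleN N Pt" "{..<N}"
    "\<lambda>i \<omega>. f (snd (\<omega> i))" "\<lambda>\<omega>. f (snd (\<omega> 0))" "- S" S
    using assms by (rule iid_sample_terms)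
  have "integrable (sampleN N Pt) (\<lambda>\<omega>. f (snd (\<omega> i)))" if "i \<in> {..<N}" for i
    using that by (rule interval_bounded_random_variable.integrable[OF X.bounded_random_variable])
  then have "(\<integral>\<omega>. Lest N f \<omega> \<partial>sampleN N Pt) = (\<Sum>i<N. \<integral>\<omega>. f (snd (\<omega> i)) \<partial>sampleN N Pt) / real N"
    unfolding Lest_def integral_divide_zero by (rule Bochner_Integration.integral_sum[THEN arg_cong])
  also have "\<dots> = (\<integral>z. f (snd z) \<partial>pairlaw Pt)"
    using assms by (simp add: integral_sample_term)
  finally show ?thesis
    by (simp add: integral_pairlaw_snd)
qed

lemma Lest_deviation_prob_le:
  assumes N: "N \<ge> 1" and "0 < S" "0 \<le> \<epsilon>"
  shows "measure (sampleN N Pt)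
      {\<omega> \<in> space (sampleN N Pt). \<epsilon> \<le> \<bar>Lest N f \<omega> - (\<integral>\<omega>. Lest N f \<omega> \<partial>sampleN N Pt)\<bar>}
    \<le> 2 * exp (- 2 * real N * \<epsilon>\<^sup>2 / (2 * S)\<^sup>2)"
proof -
  interpret Hoeffding_ineq_iid "sampleN N Pt" "{..<N}"
    "\<lambda>i \<omega>. f (snd (\<omega> i))" "\<lambda>\<omega>. f (snd (\<omega> 0))" "- S" S "\<integral>\<omega>. f (snd (\<omega> 0)) \<partial>sampleN N Pt"
    using iid_sample_terms[OF N] by (simp add: Hoeffding_ineq_iid_def)
  have mean: "(\<integral>\<omega>. Lest N f \<omega> \<partial>sampleN N Pt) = (\<integral>\<omega>. f (snd (\<omega> 0)) \<partial>sampleN N Pt)"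
    using N by (simp add: integral_Lest integral_sample_term integral_pairlaw_snd)
  have "- S < S" "{..<N} \<noteq> {}"
    using assms by (auto simp: lessThan_empty_iff)
  with Hoeffding_ineq_abs_ge'[OF \<open>0 \<le> \<epsilon>\<close>] show ?thesis
    unfolding mean unfolding Lest_def card_lessThan by simp
qed

lemma Lest_concentration:
  assumes N: "N \<ge> 1" and "0 < \<delta>"
  defines "\<epsilon> \<equiv> 2 * S * sqrt (ln (2 / \<delta>) / (2 * real N))"
  shows "1 - \<delta> \<le> measure (sampleN N Pt) {\<omega> \<in> space (sampleN N Pt).
    \<bar>Lest N f \<omega> - (\<integral>\<omega>. Lest N f \<omega> \<partial>sampleN N Pt)\<bar> \<le> \<epsilon>}" (is "_ \<le> measure _ ?good")
proof -
  interpret prob_space "sampleN N Pt"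
    by (rule prob_space_sampleN)
  let ?bad = "{\<omega> \<in> space (sampleN N Pt).
    \<epsilon> \<le> \<bar>Lest N f \<omega> - (\<integral>\<omega>. Lest N f \<omega> \<partial>sampleN N Pt)\<bar>}"
  have "0 \<le> S"
    using f_bound[OF zero_in_cubeX] by linarith
  \<comment> \<open>Hoeffding's inequality needs a nondegenerate range, so \<open>S = 0\<close> is treated separately.\<close>
  then consider "1 \<le> \<delta>" | "S = 0" | "\<delta> < 1" "0 < S"
    by linarith
  then show ?thesis
  proof cases
    case 1
    then show ?thesis
      using measure_nonneg[of "sampleN N Pt" ?good] by linarith
  next
    case 2
    have Lest_zero: "Lest N f \<omega> = 0" if "\<omega> \<in> space (sampleN N Pt)" for \<omega>
      using f_bound[OF snd_sample_in_cubeX[OF that]] 2 by (simp add: Lest_def)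
    then have "(\<integral>\<omega>. Lest N f \<omega> \<partial>sampleN N Pt) = 0"
      by (simp cong: Bochner_Integration.integral_cong)
    then have "?good = space (sampleN N Pt)"
      using 2 Lest_zero by (auto simp: \<epsilon>_def)
    then show ?thesis
      using \<open>0 < \<delta>\<close> by (simp add: prob_space)
  next
    case 3
    have "0 < ln (2 / \<delta>)"
      using 3 \<open>0 < \<delta>\<close> by simp
    then have "\<epsilon>\<^sup>2 = (2 * S)\<^sup>2 * (ln (2 / \<delta>) / (2 * real N))" and "0 \<le> \<epsilon>"
      using N 3 by (simp_all add: \<epsilon>_def power_mult_distrib)
    then have "measure (sampleN N Pt) ?bad \<le> \<delta>"
      using Lest_deviation_prob_le[OF N \<open>0 < S\<close> \<open>0 \<le> \<epsilon>\<close>] 3 N \<open>0 < \<delta>\<close> by (simp add: exp_minus)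
    moreover have "?bad \<in> sets (sampleN N Pt)"
      by measurable
    moreover have "space (sampleN N Pt) - ?bad \<subseteq> ?good"
      by auto
    ultimately show ?thesis
      using prob_compl[of ?bad] finite_measure_mono[of "space (sampleN N Pt) - ?bad" ?good] by simp
  qed
qed

lemma integrable_sampler_mean: "integrable U01 (\<lambda>\<beta>. \<integral>x. f x \<partial>Pt \<beta>)"
proof (rule U01.integrable_const_bound[where B=S])
  show "AE \<beta> in U01. norm (\<integral>x. f x \<partial>Pt \<beta>) \<le> S"
  proof (rule AE_I2)
    fix \<beta> assume "\<beta> \<in> space U01"
    then have "\<beta> \<in> {0..1}"
      by (simp add: space_U01)
    then show "norm (\<integral>x. f x \<partial>Pt \<beta>) \<le> S"
      using prob_space.abs_integral_le[OF prob_space_Pt, of \<beta> f S] f_bound by (simp add: space_Pt)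
  qed
qed measurable

lemma Lest_bias_le_SUP:
  fixes d :: "real \<Rightarrow> real"
  assumes N: "N \<ge> 1" and "0 \<le> c" and "bdd_above (d ` {0..1})"
    and mean_diff: "\<And>\<beta>. \<beta> \<in> {0..1} \<Longrightarrow> \<bar>(\<integral>x. f x \<partial>Ph (\<lambda>x. \<beta> * f x)) - (\<integral>x. f x \<partial>Pt \<beta>)\<bar> \<le> c * d \<beta>"
  shows "\<bar>Lh f - (\<integral>\<omega>. Lest N f \<omega> \<partial>sampleN N Pt)\<bar> \<le> c * (SUP \<beta>\<in>{0..1}. d \<beta>)"
proof -
  have "\<bar>(\<integral>x. f x \<partial>Ph (\<lambda>x. \<beta> * f x)) - (\<integral>x. f x \<partial>Pt \<beta>)\<bar> \<le> c * (SUP \<beta>\<in>{0..1}. d \<beta>)"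
    if "\<beta> \<in> space U01" for \<beta>
    using that mean_diff[of \<beta>] mult_left_mono[OF cSUP_upper[OF _ assms(3)] \<open>0 \<le> c\<close>, of \<beta>]
    by (simp add: space_U01)
  then have "\<bar>\<integral>\<beta>. (\<integral>x. f x \<partial>Ph (\<lambda>x. \<beta> * f x)) - (\<integral>x. f x \<partial>Pt \<beta>) \<partial>U01\<bar> \<le> c * (SUP \<beta>\<in>{0..1}. d \<beta>)"
    by (rule U01.abs_integral_le)
  then show ?thesis
    using N integrable_Gibbs_mean[OF f_meas f_bound] integrable_sampler_mean
    by (simp add: Lh_eq_integral_Gibbs_mean[OF f_meas f_bound] integral_Lest)
qed

lemma Gibbs_sampler_mean_diff_le_dTV:
  assumes "\<beta> \<in> {0..1}"
  shows "\<bar>(\<integral>x. f x \<partial>Ph (\<lambda>x. \<beta> * f x)) - (\<integral>x. f x \<partial>Pt \<beta>)\<bar> \<le> 2 * S * dTV (Ph (\<lambda>x. \<beta> * f x)) (Pt \<beta>)"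
  using assms f_bound
  by (intro integral_diff_le_dTV prob_space_Ph_scaled[OF f_meas f_bound] prob_space_Pt)
    (simp_all add: sets_Pt sets_Ph space_Ph)

lemma Gibbs_sampler_mean_diff_le_W1:
  assumes "\<beta> \<in> {0..1}" and "lipschitz_on L cubeX f"
  shows "\<bar>(\<integral>x. f x \<partial>Ph (\<lambda>x. \<beta> * f x)) - (\<integral>x. f x \<partial>Pt \<beta>)\<bar> \<le> L * W1 MX (Ph (\<lambda>x. \<beta> * f x)) (Pt \<beta>)"
  using assms borel_id_MX
  by (intro integral_diff_le_W1 prob_space_Ph_scaled[OF f_meas f_bound] prob_space_Pt)
    (simp_all add: sets_Pt sets_Ph space_MX bounded_cubeX)

lemma bdd_above_dTV_Gibbs_sampler: "bdd_above ((\<lambda>\<beta>. dTV (Ph (\<lambda>x. \<beta> * f x)) (Pt \<beta>)) ` {0..1})"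
  by (intro bdd_aboveI[where M=1])
    (auto intro!: dTV_le_1 prob_space_Ph_scaled[OF f_meas f_bound] prob_space_Pt)

lemma bdd_above_W1_Gibbs_sampler: "bdd_above ((\<lambda>\<beta>. W1 MX (Ph (\<lambda>x. \<beta> * f x)) (Pt \<beta>)) ` {0..1})"
  by (intro bdd_aboveI[where M="diameter cubeX"])
    (auto intro!: W1_le_diameter[OF borel_id_MX, unfolded space_MX, OF bounded_cubeX]
      prob_space_Ph_scaled[OF f_meas f_bound] prob_space_Pt simp: sets_Pt sets_Ph)

end

end

theorem theorem13:
  fixes f :: "'a::euclidean_space \<Rightarrow> real"
    and N :: nat
    and Pt :: "real \<Rightarrow> 'a measure"
    and \<delta> :: real
  assumes f_meas: "f \<in> borel_measurable MX"
    and f_bdd: "bounded (f ` cubeX)"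
    and N_pos: "N \<ge> 1"
    and Pt_kernel: "Pt \<in> measurable U01 (subprob_algebra MX)"
    and Pt_prob: "\<And>\<beta>. \<beta> \<in> {0..1} \<Longrightarrow> prob_space (Pt \<beta>)"
    and delta_pos: "\<delta> > 0"
  shows "measure (sampleN N Pt)
           {\<omega> \<in> space (sampleN N Pt).
              \<bar>Lest N f \<omega> - Lh f\<bar>
                \<le> \<bar>Lh f - integral\<^sup>L (sampleN N Pt) (Lest N f)\<bar>
                  + 2 * supnorm f * sqrt (ln (2 / \<delta>) / (2 * real N))} \<ge> 1 - \<delta>
       \<and> \<bar>Lh f - integral\<^sup>L (sampleN N Pt) (Lest N f)\<bar>
           \<le> 2 * supnorm f * (SUP \<beta>\<in>{0..1}. dTV (Ph (\<lambda>x. \<beta> * f x)) (Pt \<beta>))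
       \<and> ((\<exists>C. lipschitz_on C cubeX f) \<longrightarrow>
         \<bar>Lh f - integral\<^sup>L (sampleN N Pt) (Lest N f)\<bar>
           \<le> lipconst f * (SUP \<beta>\<in>{0..1}. W1 MX (Ph (\<lambda>x. \<beta> * f x)) (Pt \<beta>)))"
proof -
  interpret sampler Pt
    using Pt_kernel Pt_prob by (rule sampler.intro)
  have f_bound: "\<And>x. x \<in> cubeX \<Longrightarrow> \<bar>f x\<bar> \<le> supnorm f"
    using f_bdd by (rule abs_le_supnorm)
  interpret sample: prob_space "sampleN N Pt"
    by (rule prob_space_sampleN)
  have "0 \<le> supnorm f"
    using f_bound[OF zero_in_cubeX] by linarith
  let ?E = "integral\<^sup>L (sampleN N Pt) (Lest N f)"
  let ?\<epsilon> = "2 * supnorm f * sqrt (ln (2 / \<delta>) / (2 * real N))"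
  have "1 - \<delta> \<le> measure (sampleN N Pt) {\<omega> \<in> space (sampleN N Pt). \<bar>Lest N f \<omega> - ?E\<bar> \<le> ?\<epsilon>}"
    by (rule Lest_concentration[OF f_meas f_bound N_pos delta_pos])
  also have "\<dots> \<le> measure (sampleN N Pt)
      {\<omega> \<in> space (sampleN N Pt). \<bar>Lest N f \<omega> - Lh f\<bar> \<le> \<bar>Lh f - ?E\<bar> + ?\<epsilon>}"
    using measurable_Lest[OF f_meas f_bound]
    by (intro sample.finite_measure_mono) auto
  moreover have "\<bar>Lh f - ?E\<bar> \<le> 2 * supnorm f * (SUP \<beta>\<in>{0..1}. dTV (Ph (\<lambda>x. \<beta> * f x)) (Pt \<beta>))"
    using \<open>0 \<le> supnorm f\<close> Gibbs_sampler_mean_diff_le_dTV[OF f_meas f_bound]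
    by (intro Lest_bias_le_SUP[OF f_meas f_bound N_pos] bdd_above_dTV_Gibbs_sampler[OF f_meas f_bound])
      simp_all
  moreover have "\<bar>Lh f - ?E\<bar> \<le> lipconst f * (SUP \<beta>\<in>{0..1}. W1 MX (Ph (\<lambda>x. \<beta> * f x)) (Pt \<beta>))"
    if "\<exists>C. lipschitz_on C cubeX f"
    using lipschitz_on_lipconst[OF that] Gibbs_sampler_mean_diff_le_W1[OF f_meas f_bound]
    by (intro Lest_bias_le_SUP[OF f_meas f_bound N_pos] bdd_above_W1_Gibbs_sampler[OF f_meas f_bound])
      (simp_all add: lipschitz_on_nonneg)
  ultimately show ?thesis
    by auto
qed

end
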